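(* Let $\Omega\subset\mathbb{R}^2$ be a convex polygon with $m$ sides, let $p\in\operatorname{int}\Omega$ and $r>0$. Then the Thompson ball $B_T(p,r)$ equals $B_F(p,r)\cap B_{rF}(p,r)$, and it is a convex polygon with at most $2m$ sides.
   Context: For distinct $p,q\in\operatorname{int}\Omega$, let $q'$ be the point where the ray from $p$ through $q$ meets $\partial\Omega$. The Funk weak metric is $F_\Omega(p,q)=\ln\frac{\|p-q'\|}{\|q-q'\|}$, with $F_\Omega(p,p)=0$. The reverse Funk metric is $rF_\Omega(p,q)=F_\Omega(q,p)$. The Thompson metric is $T_\Omega(p,q)=\max(F_\Omega(p,q),rF_\Omega(p,q))$. For a function $D\in\{F_\Omega,rF_\Omega,T_\Omega\}$, the ball of radius $r$ about $p$ is $B_D(p,r)=\{q\in\operatorname{int}\Omega: D(p,q)\le r\}$; these are written $B_F$, $B_{rF}$, $B_T$ respectively. *)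

theory Defs
  imports "HOL-Analysis.Analysis"
begin

definition convex_polygon :: "(real^2) set \<Rightarrow> nat \<Rightarrow> bool" where
  "convex_polygon K n \<longleftrightarrow> polytope K \<and> aff_dim K = 2 \<and> card {F. F facet_of K} = n"

definition ray_exit :: "(real^2) set \<Rightarrow> real^2 \<Rightarrow> real^2 \<Rightarrow> real^2" where
  "ray_exit \<Omega> p q = (THE x. x \<in> frontier \<Omega> \<and> (\<exists>t>0. x = p + t *\<^sub>R (q - p)))"

definition funk :: "(real^2) set \<Rightarrow> real^2 \<Rightarrow> real^2 \<Rightarrow> real" where
  "funk \<Omega> p q = (if p = q then 0
     else ln (norm (p - ray_exit \<Omega> p q) / norm (q - ray_exit \<Omega> p q)))"

definition reverse_funk :: "(real^2) set \<Rightarrow> real^2 \<Rightarrow> real^2 \<Rightarrow> real" where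
  "reverse_funk \<Omega> p q = funk \<Omega> q p"

definition thompson :: "(real^2) set \<Rightarrow> real^2 \<Rightarrow> real^2 \<Rightarrow> real" where
  "thompson \<Omega> p q = max (funk \<Omega> p q) (reverse_funk \<Omega> p q)"

definition dball :: "(real^2) set \<Rightarrow> ((real^2) set \<Rightarrow> real^2 \<Rightarrow> real^2 \<Rightarrow> real)
    \<Rightarrow> real^2 \<Rightarrow> real \<Rightarrow> (real^2) set" where
  "dball \<Omega> D p r = {q \<in> interior \<Omega>. D \<Omega> p q \<le> r}"

end

theory Submission
  imports Defs
begin

text \<open>For the Funk weak metric, \<open>F(p,q) \<le> r\<close> says that the ray from p through q leaves \<Omega>
no earlier than at \<open>p + c (q - p)\<close>, where \<open>c = e\<^sup>r / (e\<^sup>r - 1)\<close>; so the forward Funk ball is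
the preimage of \<Omega> under the homothety of centre p and ratio c, and the reverse Funk ball is
the preimage under the homothety of ratio \<open>1 - c\<close>.
If \<Omega> is cut out by m half-planes, each preimage is cut out by m half-planes as well, so the
Thompson ball is a polygon cut out by 2m half-planes and has at most 2m edges.\<close>

definition homothety :: "'a::real_vector \<Rightarrow> real \<Rightarrow> 'a \<Rightarrow> 'a" where
  "homothety p k q = p + k *\<^sub>R (q - p)"

lemma halfspace_family_coeffs:
  assumes "\<forall>h\<in>H. \<exists>a b. a \<noteq> 0 \<and> h = {x. a \<bullet> x \<le> b}"
  obtains a b where "\<And>h. h \<in> H \<Longrightarrow> a h \<noteq> 0 \<and> h = {x. a h \<bullet> x \<le> b h}"
  using assms by metis

lemma polyhedron_minimal_rep_facet_point:
  fixes S :: "'a::euclidean_space set"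
  assumes "finite F"
      and seq: "S = affine hull S \<inter> \<Inter>F"
      and faceq: "\<And>h. h \<in> F \<Longrightarrow> a h \<noteq> 0 \<and> h = {x. a h \<bullet> x \<le> b h}"
      and psub: "\<And>F'. F' \<subset> F \<Longrightarrow> S \<subset> affine hull S \<inter> \<Inter>F'"
      and "S \<noteq> {}" and h1: "h1 \<in> F"
  obtains w where "w \<in> S" "a h1 \<bullet> w = b h1" "\<And>h. h \<in> F - {h1} \<Longrightarrow> a h \<bullet> w < b h"
proof -
  have mem: "y \<in> h \<longleftrightarrow> a h \<bullet> y \<le> b h" if "h \<in> F" for h y
    using faceq[OF that] by blast
  have "polyhedron S"
    unfolding polyhedron_Int_affine by (intro exI[of _ F]) (use assms(1) seq faceq in blast)
  then have "rel_interior S \<noteq> {}"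
    using \<open>S \<noteq> {}\<close> by (simp add: rel_interior_eq_empty polyhedron_imp_convex)
  then obtain x where "x \<in> rel_interior S" by blast
  then have xS: "x \<in> S" and xlt: "\<And>h. h \<in> F \<Longrightarrow> a h \<bullet> x < b h"
    using rel_interior_polyhedron_explicit[OF assms(1-4)] by auto
  obtain z where zaff: "z \<in> affine hull S" and zF: "z \<in> \<Inter>(F - {h1})" and zS: "z \<notin> S"
    using psub[of "F - {h1}"] h1 by blast
  have zle: "a h \<bullet> z \<le> b h" if "h \<in> F - {h1}" for h
    using zF that mem by blast
  have z1: "a h1 \<bullet> z > b h1"
  proof (rule ccontr)
    assume "\<not> a h1 \<bullet> z > b h1"
    then have "z \<in> h1" using mem[OF h1] by simp
    with zF have "z \<in> \<Inter>F" by blast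
    with zaff zS seq show False by blast
  qed
  text \<open>The segment from x to z crosses the hyperplane of h1 strictly inside all other half-spaces.\<close>
  define t where "t = (b h1 - a h1 \<bullet> x) / (a h1 \<bullet> z - a h1 \<bullet> x)"
  have t0: "0 < t" and t1: "t < 1"
    using xlt[OF h1] z1 by (auto simp: t_def divide_less_eq)
  define w where "w = (1 - t) *\<^sub>R x + t *\<^sub>R z"
  have inner_w: "a h \<bullet> w = (1 - t) * (a h \<bullet> x) + t * (a h \<bullet> z)" for h
    by (simp add: w_def inner_add_right)
  have w1: "a h1 \<bullet> w = b h1"
  proof -
    have "t * (a h1 \<bullet> z - a h1 \<bullet> x) = b h1 - a h1 \<bullet> x"
      using xlt[OF h1] z1 by (simp add: t_def)
    then show ?thesis by (simp add: inner_w algebra_simps)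
  qed
  have wlt: "a h \<bullet> w < b h" if "h \<in> F - {h1}" for h
  proof -
    have "(1 - t) * (a h \<bullet> x) < (1 - t) * b h"
      using xlt that t1 by simp
    moreover have "t * (a h \<bullet> z) \<le> t * b h"
      using zle[OF that] t0 by simp
    ultimately show ?thesis by (simp add: inner_w algebra_simps)
  qed
  have "w \<in> affine hull S"
    unfolding w_def using hull_inc[OF xS] zaff by (intro mem_affine affine_affine_hull) auto
  moreover have "w \<in> h" if "h \<in> F" for h
    using w1 wlt[of h] mem[OF that] that by (cases "h = h1") auto
  ultimately have "w \<in> S" using seq by blast
  then show thesis using w1 wlt by (rule that)
qed

lemma card_facets_polyhedron_minimal_rep:
  fixes S :: "'a::euclidean_space set"
  assumes "finite F"
      and seq: "S = affine hull S \<inter> \<Inter>F"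
      and faceq: "\<And>h. h \<in> F \<Longrightarrow> a h \<noteq> 0 \<and> h = {x. a h \<bullet> x \<le> b h}"
      and psub: "\<And>F'. F' \<subset> F \<Longrightarrow> S \<subset> affine hull S \<inter> \<Inter>F'"
      and "S \<noteq> {}"
  shows "card {C. C facet_of S} = card F"
proof -
  have "inj_on (\<lambda>h. S \<inter> {x. a h \<bullet> x = b h}) F"
  proof (rule inj_onI, rule ccontr)
    fix h1 h2 assume h1: "h1 \<in> F" and h2: "h2 \<in> F" and "h1 \<noteq> h2"
      and eq: "S \<inter> {x. a h1 \<bullet> x = b h1} = S \<inter> {x. a h2 \<bullet> x = b h2}"
    obtain w where "w \<in> S" "a h1 \<bullet> w = b h1" and wlt: "\<And>h. h \<in> F - {h1} \<Longrightarrow> a h \<bullet> w < b h"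
      using polyhedron_minimal_rep_facet_point[OF assms h1] by blast
    with eq have "a h2 \<bullet> w = b h2" by blast
    moreover have "a h2 \<bullet> w < b h2" using wlt h2 \<open>h1 \<noteq> h2\<close> by blast
    ultimately show False by simp
  qed
  moreover have "{C. C facet_of S} = (\<lambda>h. S \<inter> {x. a h \<bullet> x = b h}) ` F"
    using facet_of_polyhedron_explicit[OF assms(1-4)] by blast
  ultimately show ?thesis by (simp add: card_image)
qed

lemma card_facets_le_card_halfspaces:
  fixes S :: "'a::euclidean_space set"
  assumes "finite H" and seq: "S = affine hull S \<inter> \<Inter>H"
    and hs: "\<forall>h\<in>H. \<exists>a b. a \<noteq> 0 \<and> h = {x. a \<bullet> x \<le> b}"
  shows "card {C. C facet_of S} \<le> card H"
proof (cases "S = {}")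
  case False
  define Reps where "Reps = {G. G \<subseteq> H \<and> S = affine hull S \<inter> \<Inter>G}"
  have "finite Reps" using \<open>finite H\<close> by (simp add: Reps_def)
  then obtain H' where H': "H' \<in> Reps" and min: "\<And>G. G \<in> Reps \<Longrightarrow> G \<le> H' \<Longrightarrow> H' = G"
    using finite_has_minimal2[of Reps H] seq by (auto simp: Reps_def)
  have "H' \<subseteq> H" and seq': "S = affine hull S \<inter> \<Inter>H'" using H' by (auto simp: Reps_def)
  have psub: "S \<subset> affine hull S \<inter> \<Inter>G" if "G \<subset> H'" for G
  proof (rule psubsetI)
    show "S \<subseteq> affine hull S \<inter> \<Inter>G"
      using seq' that by blast
    show "S \<noteq> affine hull S \<inter> \<Inter>G"
      using min[of G] that \<open>H' \<subseteq> H\<close> by (auto simp: Reps_def)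
  qed
  have hs': "\<forall>h\<in>H'. \<exists>a b. a \<noteq> 0 \<and> h = {x. a \<bullet> x \<le> b}"
    using hs \<open>H' \<subseteq> H\<close> by blast
  obtain a b where ab: "\<And>h. h \<in> H' \<Longrightarrow> a h \<noteq> 0 \<and> h = {x. a h \<bullet> x \<le> b h}"
    using halfspace_family_coeffs[OF hs'] by blast
  have "card {C. C facet_of S} = card H'"
    using finite_subset[OF \<open>H' \<subseteq> H\<close> \<open>finite H\<close>] seq' ab psub False
    by (rule card_facets_polyhedron_minimal_rep)
  also have "\<dots> \<le> card H" using \<open>finite H\<close> \<open>H' \<subseteq> H\<close> by (rule card_mono)
  finally show ?thesis .
qed simp

lemma polyhedron_halfspace_rep_card_facets:
  fixes S :: "'a::euclidean_space set"
  assumes "polyhedron S" and "S \<noteq> {}"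
  obtains H where "finite H" "S = affine hull S \<inter> \<Inter>H"
    "\<forall>h\<in>H. \<exists>a b. a \<noteq> 0 \<and> h = {x. a \<bullet> x \<le> b}" "card H = card {C. C facet_of S}"
proof -
  obtain H where "finite H" and seq: "S = affine hull S \<inter> \<Inter>H"
    and hs: "\<forall>h\<in>H. \<exists>a b. a \<noteq> 0 \<and> h = {x. a \<bullet> x \<le> b}"
    and psub: "\<forall>G. G \<subset> H \<longrightarrow> S \<subset> affine hull S \<inter> \<Inter>G"
    using assms(1) unfolding polyhedron_Int_affine_minimal by (elim exE conjE) (rule that)
  obtain a b where ab: "\<And>h. h \<in> H \<Longrightarrow> a h \<noteq> 0 \<and> h = {x. a h \<bullet> x \<le> b h}"
    using halfspace_family_coeffs[OF hs] by blast
  have "card {C. C facet_of S} = card H"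
    using card_facets_polyhedron_minimal_rep[OF \<open>finite H\<close> seq ab _ assms(2)] psub by blast
  with \<open>finite H\<close> seq hs show thesis by (intro that) auto
qed

lemma vimage_homothety_halfspace:
  fixes a p :: "'a::real_inner"
  assumes "a \<noteq> 0" and "k \<noteq> 0"
  shows "\<exists>a' b'. a' \<noteq> 0 \<and> homothety p k -` {x. a \<bullet> x \<le> b} = {x. a' \<bullet> x \<le> b'}"
proof (intro exI conjI)
  show "k *\<^sub>R a \<noteq> 0" using assms by simp
  show "homothety p k -` {x. a \<bullet> x \<le> b} = {x. (k *\<^sub>R a) \<bullet> x \<le> b - a \<bullet> p + k * (a \<bullet> p)}"
    by (auto simp: homothety_def inner_simps algebra_simps)
qed

lemma bounded_vimage_homothety:
  fixes p :: "'a::real_normed_vector"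
  assumes "compact S" and "k \<noteq> 0"
  shows "bounded (homothety p k -` S)"
proof -
  have "homothety p k -` S \<subseteq> homothety p (inverse k) ` S"
  proof
    fix q assume "q \<in> homothety p k -` S"
    moreover have "q = homothety p (inverse k) (homothety p k q)"
      using \<open>k \<noteq> 0\<close> by (simp add: homothety_def)
    ultimately show "q \<in> homothety p (inverse k) ` S" by blast
  qed
  moreover have "compact (homothety p (inverse k) ` S)"
    using \<open>compact S\<close> by (intro compact_continuous_image)
      (auto simp: homothety_def intro!: continuous_intros)
  ultimately show ?thesis by (meson bounded_subset compact_imp_bounded)
qed

lemma Int_vimage_homothety_halfspaces:
  fixes p :: "'a::real_inner"
  assumes "finite H" and hs: "\<forall>h\<in>H. \<exists>a b. a \<noteq> 0 \<and> h = {x. a \<bullet> x \<le> b}"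
    and "k1 \<noteq> 0" and "k2 \<noteq> 0"
  obtains H' where "finite H'" "homothety p k1 -` \<Inter>H \<inter> homothety p k2 -` \<Inter>H = \<Inter>H'"
    "\<forall>h\<in>H'. \<exists>a b. a \<noteq> 0 \<and> h = {x. a \<bullet> x \<le> b}" "card H' \<le> 2 * card H"
proof
  define H' where "H' = (\<lambda>h. homothety p k1 -` h) ` H \<union> (\<lambda>h. homothety p k2 -` h) ` H"
  show "finite H'" using \<open>finite H\<close> by (simp add: H'_def)
  show "homothety p k1 -` \<Inter>H \<inter> homothety p k2 -` \<Inter>H = \<Inter>H'"
    unfolding H'_def by blast
  show "\<forall>h\<in>H'. \<exists>a b. a \<noteq> 0 \<and> h = {x. a \<bullet> x \<le> b}"
  proof
    fix h assume "h \<in> H'"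
    then obtain g k where "g \<in> H" "k \<noteq> 0" "h = homothety p k -` g"
      using \<open>k1 \<noteq> 0\<close> \<open>k2 \<noteq> 0\<close> by (auto simp: H'_def)
    moreover obtain a b where "a \<noteq> 0" "g = {x. a \<bullet> x \<le> b}"
      using hs \<open>g \<in> H\<close> by blast
    ultimately show "\<exists>a b. a \<noteq> 0 \<and> h = {x. a \<bullet> x \<le> b}"
      using vimage_homothety_halfspace[of a k p b] by simp
  qed
  have "card H' \<le> card ((\<lambda>h. homothety p k1 -` h) ` H) + card ((\<lambda>h. homothety p k2 -` h) ` H)"
    unfolding H'_def by (rule card_Un_le)
  also have "\<dots> \<le> card H + card H"
    by (intro add_mono card_image_le \<open>finite H\<close>)
  finally show "card H' \<le> 2 * card H" by simp
qed

lemma convex_polygon_Int_vimage_homothety: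
  fixes \<Omega> :: "(real^2) set"
  assumes poly: "convex_polygon \<Omega> m" and p: "p \<in> interior \<Omega>"
    and "k1 \<noteq> 0" and "k2 \<noteq> 0"
  shows "\<exists>k\<le>2 * m. convex_polygon (homothety p k1 -` \<Omega> \<inter> homothety p k2 -` \<Omega>) k"
proof -
  define D where "D = homothety p k1 -` \<Omega> \<inter> homothety p k2 -` \<Omega>"
  have polyO: "polytope \<Omega>" and "aff_dim \<Omega> = 2" and cardO: "card {F. F facet_of \<Omega>} = m"
    using poly by (simp_all add: convex_polygon_def)
  then have "affine hull \<Omega> = UNIV" using aff_dim_eq_full[of \<Omega>] by simp
  obtain H where "finite H" and OH: "\<Omega> = \<Inter>H"
    and hs: "\<forall>h\<in>H. \<exists>a b. a \<noteq> 0 \<and> h = {x. a \<bullet> x \<le> b}" and "card H = m"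
    using polyhedron_halfspace_rep_card_facets[OF polytope_imp_polyhedron[OF polyO]] p cardO
      \<open>affine hull \<Omega> = UNIV\<close> by (metis empty_iff interior_subset subsetD inf_top_left)
  obtain H' where "finite H'" and DH': "D = \<Inter>H'"
    and hs': "\<forall>h\<in>H'. \<exists>a b. a \<noteq> 0 \<and> h = {x. a \<bullet> x \<le> b}" and "card H' \<le> 2 * m"
    using Int_vimage_homothety_halfspaces[OF \<open>finite H\<close> hs \<open>k1 \<noteq> 0\<close> \<open>k2 \<noteq> 0\<close>, of p]
      \<open>card H = m\<close> unfolding D_def OH by metis
  have "bounded D"
    using bounded_vimage_homothety[OF polytope_imp_compact[OF polyO] \<open>k1 \<noteq> 0\<close>, of p]
    unfolding D_def by (rule bounded_subset) blast
  moreover have "polyhedron D"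
    unfolding polyhedron_def using \<open>finite H'\<close> DH' hs' by blast
  ultimately have "polytope D" by (simp add: polytope_eq_bounded_polyhedron)
  have "p \<in> interior D"
  proof -
    define U where "U = homothety p k1 -` interior \<Omega> \<inter> homothety p k2 -` interior \<Omega>"
    have "open U"
      unfolding U_def homothety_def by (intro open_Int open_vimage open_interior continuous_intros)
    moreover have "U \<subseteq> D" using interior_subset by (auto simp: U_def D_def)
    moreover have "p \<in> U" using p by (simp add: U_def homothety_def)
    ultimately show ?thesis using interior_maximal by blast
  qed
  then have "aff_dim D = 2"
    using aff_dim_nonempty_interior[of D] by auto
  have "card {C. C facet_of D} \<le> 2 * m"
    using card_facets_le_card_halfspaces[OF \<open>finite H'\<close> _ hs'] DH' hull_subset[of D]
      \<open>card H' \<le> 2 * m\<close> by (metis inf.absorb_iff2 le_trans)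
  then show ?thesis
    using \<open>polytope D\<close> \<open>aff_dim D = 2\<close> by (auto simp: convex_polygon_def D_def)
qed

lemma convex_ray_to_frontier:
  fixes S :: "'a::euclidean_space set"
  assumes "convex S" and "compact S" and x: "x \<in> interior S" and "l \<noteq> 0"
  obtains T where "T > 0" "x + T *\<^sub>R l \<in> frontier S"
    "\<And>t. 0 \<le> t \<Longrightarrow> t < T \<Longrightarrow> x + t *\<^sub>R l \<in> interior S"
    "\<And>t. 0 \<le> t \<Longrightarrow> x + t *\<^sub>R l \<in> S \<longleftrightarrow> t \<le> T"
proof -
  obtain T where T: "T > 0" and fr: "x + T *\<^sub>R l \<in> frontier S"
    and int: "\<And>t. 0 \<le> t \<Longrightarrow> t < T \<Longrightarrow> x + t *\<^sub>R l \<in> interior S"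
    using ray_to_frontier[OF compact_imp_bounded[OF \<open>compact S\<close>] x \<open>l \<noteq> 0\<close>] by blast
  have "x + T *\<^sub>R l \<in> S"
    using fr frontier_subset_closed[OF compact_imp_closed[OF \<open>compact S\<close>]] by blast
  moreover have "x + t *\<^sub>R l \<notin> S" if "T < t" for t
  proof
    assume "x + t *\<^sub>R l \<in> S"
    text \<open>Then the frontier point would lie on an open segment from an interior point into S.\<close>
    moreover have "x + T *\<^sub>R l = (1 - T / t) *\<^sub>R x + (T / t) *\<^sub>R (x + t *\<^sub>R l)"
      using T that by (simp add: algebra_simps)
    ultimately have "x + T *\<^sub>R l \<in> open_segment x (x + t *\<^sub>R l)"
      using T that \<open>l \<noteq> 0\<close> unfolding in_segment by (intro conjI exI[of _ "T / t"]) auto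
    then have "x + T *\<^sub>R l \<in> interior S"
      using in_interior_closure_convex_segment[OF \<open>convex S\<close> x] \<open>x + t *\<^sub>R l \<in> S\<close>
        closure_subset by blast
    with fr show False by (simp add: frontier_def)
  qed
  ultimately have "x + t *\<^sub>R l \<in> S \<longleftrightarrow> t \<le> T" if "0 \<le> t" for t
    using int[OF that] interior_subset \<open>x + T *\<^sub>R l \<in> S\<close> by (cases t T rule: linorder_cases) auto
  with T fr int show thesis by (rule that)
qed

lemma ray_exit_eq:
  fixes \<Omega> :: "(real^2) set"
  assumes "convex \<Omega>" and "compact \<Omega>" and x: "x \<in> interior \<Omega>"
    and y: "y \<in> interior \<Omega>" and "x \<noteq> y"
  obtains T where "T > 1" "ray_exit \<Omega> x y = x + T *\<^sub>R (y - x)"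
    "\<And>t. 0 \<le> t \<Longrightarrow> x + t *\<^sub>R (y - x) \<in> \<Omega> \<longleftrightarrow> t \<le> T"
proof -
  obtain T where "T > 0" and fr: "x + T *\<^sub>R (y - x) \<in> frontier \<Omega>"
    and int: "\<And>t. 0 \<le> t \<Longrightarrow> t < T \<Longrightarrow> x + t *\<^sub>R (y - x) \<in> interior \<Omega>"
    and mem: "\<And>t. 0 \<le> t \<Longrightarrow> x + t *\<^sub>R (y - x) \<in> \<Omega> \<longleftrightarrow> t \<le> T"
    using convex_ray_to_frontier[OF assms(1-3), of "y - x"] \<open>x \<noteq> y\<close> by auto
  have "1 \<le> T" using mem[of 1] y interior_subset by auto
  moreover have "T \<noteq> 1" using fr y by (auto simp: frontier_def)
  ultimately have "T > 1" by simp
  have "ray_exit \<Omega> x y = x + T *\<^sub>R (y - x)"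
    unfolding ray_exit_def
  proof (rule the_equality)
    show "x + T *\<^sub>R (y - x) \<in> frontier \<Omega> \<and> (\<exists>t>0. x + T *\<^sub>R (y - x) = x + t *\<^sub>R (y - x))"
      using fr \<open>T > 0\<close> by blast
  next
    fix z assume "z \<in> frontier \<Omega> \<and> (\<exists>t>0. z = x + t *\<^sub>R (y - x))"
    then obtain s where fz: "z \<in> frontier \<Omega>" and "s > 0" and z: "z = x + s *\<^sub>R (y - x)"
      by blast
    have "z \<in> \<Omega>"
      using fz frontier_subset_closed[OF compact_imp_closed[OF \<open>compact \<Omega>\<close>]] by blast
    then have "s \<le> T" using mem \<open>s > 0\<close> z by simp
    moreover have "\<not> s < T" using int[of s] fz z \<open>s > 0\<close> by (auto simp: frontier_def)
    ultimately show "z = x + T *\<^sub>R (y - x)" using z by simp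
  qed
  with \<open>T > 1\<close> show thesis using mem by (rule that)
qed

lemma funk_le_iff:
  fixes \<Omega> :: "(real^2) set"
  assumes "convex \<Omega>" and "compact \<Omega>" and x: "x \<in> interior \<Omega>"
    and y: "y \<in> interior \<Omega>" and "r > 0"
  shows "funk \<Omega> x y \<le> r \<longleftrightarrow> homothety x (exp r / (exp r - 1)) y \<in> \<Omega>"
proof (cases "x = y")
  case True
  then show ?thesis using x interior_subset \<open>r > 0\<close> by (auto simp: funk_def homothety_def)
next
  case False
  obtain T where "T > 1" and exit: "ray_exit \<Omega> x y = x + T *\<^sub>R (y - x)"
    and mem: "\<And>t. 0 \<le> t \<Longrightarrow> x + t *\<^sub>R (y - x) \<in> \<Omega> \<longleftrightarrow> t \<le> T"
    using ray_exit_eq[OF assms(1-4) False] by blast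
  have "x - ray_exit \<Omega> x y = (- T) *\<^sub>R (y - x)" and "y - ray_exit \<Omega> x y = (1 - T) *\<^sub>R (y - x)"
    by (simp_all add: exit algebra_simps)
  then have "funk \<Omega> x y = ln (T / (T - 1))"
    using False \<open>T > 1\<close> by (simp add: funk_def)
  define E where "E = exp r"
  have "E > 1" using \<open>r > 0\<close> by (simp add: E_def)
  have "funk \<Omega> x y \<le> r \<longleftrightarrow> T / (T - 1) \<le> E"
    using \<open>funk \<Omega> x y = ln (T / (T - 1))\<close> \<open>T > 1\<close> ln_le_cancel_iff[of "T / (T - 1)" E]
    by (simp add: E_def)
  also have "\<dots> \<longleftrightarrow> E / (E - 1) \<le> T"
    using \<open>T > 1\<close> \<open>E > 1\<close> by (simp add: pos_divide_le_eq algebra_simps)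
  also have "\<dots> \<longleftrightarrow> homothety x (E / (E - 1)) y \<in> \<Omega>"
    using \<open>E > 1\<close> mem[of "E / (E - 1)"] by (simp add: homothety_def)
  finally show ?thesis by (simp add: E_def)
qed

lemma in_interior_if_homothety_in:
  fixes S :: "'a::euclidean_space set"
  assumes "convex S" and p: "p \<in> interior S" and "c > 1" and "homothety p c q \<in> S"
  shows "q \<in> interior S"
proof (cases "q = p")
  case False
  have "q = (1 - 1 / c) *\<^sub>R p + (1 / c) *\<^sub>R homothety p c q"
    using \<open>c > 1\<close> by (simp add: homothety_def algebra_simps)
  then have "q \<in> open_segment p (homothety p c q)"
    using False \<open>c > 1\<close> unfolding in_segment by (intro conjI exI[of _ "1 / c"]) (auto simp: homothety_def)
  then show ?thesis
    using in_interior_closure_convex_segment[OF \<open>convex S\<close> p] assms(4) closure_subset by blast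
qed (use p in simp)

lemma thompson_ball_eq_Int_vimage_homothety:
  fixes \<Omega> :: "(real^2) set"
  assumes "convex \<Omega>" and "compact \<Omega>" and p: "p \<in> interior \<Omega>" and "r > 0"
  defines "c \<equiv> exp r / (exp r - 1)"
  shows "dball \<Omega> thompson p r = homothety p c -` \<Omega> \<inter> homothety p (1 - c) -` \<Omega>"
proof -
  have "c > 1" using \<open>r > 0\<close> by (simp add: c_def)
  have reverse: "homothety p (1 - c) q = homothety q c p" for q
    by (simp add: homothety_def algebra_simps)
  have "q \<in> dball \<Omega> thompson p r \<longleftrightarrow> q \<in> homothety p c -` \<Omega> \<inter> homothety p (1 - c) -` \<Omega>" for q
  proof (cases "q \<in> interior \<Omega>")
    case True
    then show ?thesis
      using funk_le_iff[OF assms(1,2) p True \<open>r > 0\<close>] funk_le_iff[OF assms(1,2) True p \<open>r > 0\<close>]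
      unfolding c_def[symmetric] by (simp add: dball_def thompson_def reverse_funk_def reverse)
  next
    case False
    then show ?thesis
      using in_interior_if_homothety_in[OF \<open>convex \<Omega>\<close> p \<open>c > 1\<close>] by (auto simp: dball_def)
  qed
  then show ?thesis by blast
qed

theorem mainTheorem1:
  fixes \<Omega> :: "(real^2) set" and m :: nat and p :: "real^2" and r :: real
  assumes "convex_polygon \<Omega> m"
    and "p \<in> interior \<Omega>"
    and "r > 0"
  shows "dball \<Omega> thompson p r = dball \<Omega> funk p r \<inter> dball \<Omega> reverse_funk p r
       \<and> (\<exists>k\<le>2 * m. convex_polygon (dball \<Omega> thompson p r) k)"
proof
  show "dball \<Omega> thompson p r = dball \<Omega> funk p r \<inter> dball \<Omega> reverse_funk p r"
    by (auto simp: dball_def thompson_def)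
  have "polytope \<Omega>" using assms(1) by (simp add: convex_polygon_def)
  define c where "c = exp r / (exp r - 1)"
  have "c > 1" using \<open>r > 0\<close> by (simp add: c_def)
  then have "\<exists>k\<le>2 * m. convex_polygon (homothety p c -` \<Omega> \<inter> homothety p (1 - c) -` \<Omega>) k"
    using convex_polygon_Int_vimage_homothety[OF assms(1,2)] by simp
  then show "\<exists>k\<le>2 * m. convex_polygon (dball \<Omega> thompson p r) k"
    using thompson_ball_eq_Int_vimage_homothety[OF polytope_imp_convex polytope_imp_compact, 
        OF \<open>polytope \<Omega>\<close> \<open>polytope \<Omega>\<close> assms(2,3)]
    by (simp add: c_def)
qed

end
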